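(* Let an ILP with data $\mathcal D^p=\mathbf A^f\times\mathbf A^n\times\mathbf B^f\times\mathbf B^n\times\mathbf a\times\mathbf b\times\mathbf c^f\times\mathbf c^n$ be given. A point $x=(x^f,x^n)$ is a weakly optimal solution of the ILP if and only if $x$ is a weakly feasible solution of the ILP and there exists a sign vector $\sigma\in\{-1,1\}^k$ such that the following system (the testing system in orthant $\sigma$) in the unknowns $A'^f,A'^n,a',B'^f,B'^n,b',y^f\in\mathbb R^k,y^n\in\mathbb R^\ell$ is feasible: $$A'^f\in\operatorname{diag}(y^f)\mathbf A^f,\quad A'^n\in\operatorname{diag}(y^f)\mathbf A^n,\quad a'\in\operatorname{diag}(y^f)\mathbf a,$$ $$B'^f\in\operatorname{diag}(y^n)\mathbf B^f,\quad B'^n\in\operatorname{diag}(y^n)\mathbf B^n,\quad b'\in\operatorname{diag}(y^n)\mathbf b,$$ $$A'^fx^f+A'^nx^n=a',\qquad B'^fx^f+B'^nx^n=b',$$ $$(e^TA'^f+e^TB'^f)^T\in\mathbf c^f,$$ $$(e^TA'^n+e^TB'^n)_i\in\mathbf c^n_i\ \text{ for all } i \text{ with } x^n_i>0,\qquad (e^TA'^n+e^TB'^n)_i\le\overline c^n_i\ \text{ for all } i\text{ with } x^n_i=0,$$ $$y^n\ge 0,\qquad \operatorname{diag}(\sigma)y^f\ge 0.$$ (For fixed $x$ and $\sigma$ this is a linear system, since the sign of each component of $y^f$ and $y^n$ is fixed.) Moreover, if so, a scenario witnessing weak optimality of $x$ is $(A^f,A^n,B^f,B^n,a,b,c^f,c^n)$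 with $c^f=(e^TA'^f+e^TB'^f)^T$, where for each $i=1,\dots,k$: if $y^f_i\neq0$ then $(A^f_i,A^n_i,a_i)=\frac1{y^f_i}(A'^f_i,A'^n_i,a'_i)$, otherwise $(A^f_i,A^n_i,a_i)$ is any solution of $A^f_ix^f+A^n_ix^n=a_i$, $A^f_i\in\mathbf A^f_i$, $A^n_i\in\mathbf A^n_i$, $a_i\in\mathbf a_i$; for each $i=1,\dots,\ell$: if $y^n_i>0$ then $(B^f_i,B^n_i,b_i)=\frac1{y^n_i}(B'^f_i,B'^n_i,b'_i)$, otherwise $(B^f_i,B^n_i,b_i)$ is any solution of $B^f_ix^f+B^n_ix^n\ge b_i$, $B^f_i\in\mathbf B^f_i$, $B^n_i\in\mathbf B^n_i$, $b_i\in\mathbf b_i$; and for each $i=1,\dots,n$, $c^n_i=\overline c^n_i$ if $x^n_i=0$ and $c^n_i=(e^TA'^n+e^TB'^n)_i$ otherwise.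
   Context: Interval matrix: for real matrices $\underline A\le\overline A$ (entrywise) of the same size, $\mathbf A=[\underline A,\overline A]=\{A:\underline A\le A\le\overline A\}$; interval vectors are defined analogously, and $\mathbb{IR}^{p\times q}$ denotes the set of $p\times q$ interval matrices. Data of an interval linear program (ILP): interval matrices $\mathbf A^f\in\mathbb{IR}^{k\times m}$, $\mathbf A^n\in\mathbb{IR}^{k\times n}$, $\mathbf B^f\in\mathbb{IR}^{\ell\times m}$, $\mathbf B^n\in\mathbb{IR}^{\ell\times n}$ and interval vectors $\mathbf a\in\mathbb{IR}^k$, $\mathbf b\in\mathbb{IR}^\ell$, $\mathbf c^f\in\mathbb{IR}^m$, $\mathbf c^n\in\mathbb{IR}^n$; $\mathcal D^p$ is the Cartesian product of these sets, and an element $s=(A^f,A^n,B^f,B^n,a,b,c^f,c^n)\in\mathcal D^p$ is a scenario. To a scenario is associated the linear program $LP(s)$: minimize $(c^f)^Tx^f+(c^n)^Tx^n$ over $x^f\in\mathbb R^m$, $x^n\in\mathbb R^n$ subject to $A^fx^f+A^nx^n=a$, $B^fx^f+B^nx^n\ge b$, $x^n\ge 0$. Thus $k$ is the number of equality constraints and $\ell$ the number of inequality constraints. A point $x=(x^f,x^n)$ is a weakly optimal solution of the ILP if there exists a scenario $s\in\mathcal D^p$ such that $x$ is an optimal solution of $LP(s)$; it is a weakly feasible solution if there exists a scenario $s\in\mathcal D^p$ such that $x$ is a feasible solution of $LP(s)$. Further notation: $e$ is the all-ones vector of suitable dimension; $M_i$ denotes the $i$th row of a (possibly interval) matrix $M$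 and $v_i$ the $i$th entry of a vector; $\overline c^n$ is the upper endpoint vector of $\mathbf c^n=[\underline c^n,\overline c^n]$; for $y\in\mathbb R^p$ and an interval matrix or vector $\mathbf M$ with $p$ rows, $\operatorname{diag}(y)\mathbf M=\{\operatorname{diag}(y)M: M\in\mathbf M\}$, where $\operatorname{diag}(y)$ is the diagonal matrix with diagonal $y$. *)

theory Defs
  imports Complex_Main
begin

text \<open>Matrices and vectors are represented as functions on natural-number indices
(0-based); only entries with indices below the stated dimensions are meaningful.
An interval matrix / vector is a pair (lower endpoint, upper endpoint).\<close>

type_synonym rmat = "nat \<Rightarrow> nat \<Rightarrow> real"
type_synonym rvec = "nat \<Rightarrow> real"
type_synonym imat = "rmat \<times> rmat"
type_synonym ivec = "rvec \<times> rvec"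

definition imat_wf :: "nat \<Rightarrow> nat \<Rightarrow> imat \<Rightarrow> bool" where
  "imat_wf p q M \<longleftrightarrow> (\<forall>i<p. \<forall>j<q. fst M i j \<le> snd M i j)"

definition ivec_wf :: "nat \<Rightarrow> ivec \<Rightarrow> bool" where
  "ivec_wf p v \<longleftrightarrow> (\<forall>i<p. fst v i \<le> snd v i)"

definition in_imat :: "nat \<Rightarrow> nat \<Rightarrow> imat \<Rightarrow> rmat \<Rightarrow> bool" where
  "in_imat p q M A \<longleftrightarrow> (\<forall>i<p. \<forall>j<q. fst M i j \<le> A i j \<and> A i j \<le> snd M i j)"

definition in_ivec :: "nat \<Rightarrow> ivec \<Rightarrow> rvec \<Rightarrow> bool" where
  "in_ivec p v a \<longleftrightarrow> (\<forall>i<p. fst v i \<le> a i \<and> a i \<le> snd v i)"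

definition row_in_imat :: "nat \<Rightarrow> imat \<Rightarrow> nat \<Rightarrow> rmat \<Rightarrow> bool" where
  "row_in_imat q M i A \<longleftrightarrow> (\<forall>j<q. fst M i j \<le> A i j \<and> A i j \<le> snd M i j)"

definition entry_in_ivec :: "ivec \<Rightarrow> nat \<Rightarrow> rvec \<Rightarrow> bool" where
  "entry_in_ivec v i a \<longleftrightarrow> fst v i \<le> a i \<and> a i \<le> snd v i"

definition in_diag_imat :: "nat \<Rightarrow> nat \<Rightarrow> rvec \<Rightarrow> imat \<Rightarrow> rmat \<Rightarrow> bool" where
  "in_diag_imat p q y M A' \<longleftrightarrow>
     (\<exists>A. in_imat p q M A \<and> (\<forall>i<p. \<forall>j<q. A' i j = y i * A i j))"

definition in_diag_ivec :: "nat \<Rightarrow> rvec \<Rightarrow> ivec \<Rightarrow> rvec \<Rightarrow> bool" where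
  "in_diag_ivec p y v a' \<longleftrightarrow> (\<exists>a. in_ivec p v a \<and> (\<forall>i<p. a' i = y i * a i))"

text \<open>ILP data: interval matrices A^f (k x m), A^n (k x n), B^f (l x m), B^n (l x n),
interval vectors a (k), b (l), c^f (m), c^n (n).\<close>
record ilp =
  IAf :: imat
  IAn :: imat
  IBf :: imat
  IBn :: imat
  Ia  :: ivec
  Ib  :: ivec
  Icf :: ivec
  Icn :: ivec

record scenario =
  sAf :: rmat
  sAn :: rmat
  sBf :: rmat
  sBn :: rmat
  sa  :: rvec
  sb  :: rvec
  scf :: rvec
  scn :: rvec

definition ilp_wf :: "nat \<Rightarrow> nat \<Rightarrow> nat \<Rightarrow> nat \<Rightarrow> ilp \<Rightarrow> bool" where
  "ilp_wf k l m n P \<longleftrightarrow>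
     imat_wf k m (IAf P) \<and> imat_wf k n (IAn P) \<and> imat_wf l m (IBf P) \<and> imat_wf l n (IBn P) \<and>
     ivec_wf k (Ia P) \<and> ivec_wf l (Ib P) \<and> ivec_wf m (Icf P) \<and> ivec_wf n (Icn P)"

definition in_Dp :: "nat \<Rightarrow> nat \<Rightarrow> nat \<Rightarrow> nat \<Rightarrow> ilp \<Rightarrow> scenario \<Rightarrow> bool" where
  "in_Dp k l m n P s \<longleftrightarrow>
     in_imat k m (IAf P) (sAf s) \<and> in_imat k n (IAn P) (sAn s) \<and>
     in_imat l m (IBf P) (sBf s) \<and> in_imat l n (IBn P) (sBn s) \<and>
     in_ivec k (Ia P) (sa s) \<and> in_ivec l (Ib P) (sb s) \<and>
     in_ivec m (Icf P) (scf s) \<and> in_ivec n (Icn P) (scn s)"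

definition lp_feasible :: "nat \<Rightarrow> nat \<Rightarrow> nat \<Rightarrow> nat \<Rightarrow> scenario \<Rightarrow> rvec \<Rightarrow> rvec \<Rightarrow> bool" where
  "lp_feasible k l m n s xf xn \<longleftrightarrow>
     (\<forall>i<k. (\<Sum>j<m. sAf s i j * xf j) + (\<Sum>j<n. sAn s i j * xn j) = sa s i) \<and>
     (\<forall>i<l. (\<Sum>j<m. sBf s i j * xf j) + (\<Sum>j<n. sBn s i j * xn j) \<ge> sb s i) \<and>
     (\<forall>j<n. xn j \<ge> 0)"

definition lp_obj :: "nat \<Rightarrow> nat \<Rightarrow> scenario \<Rightarrow> rvec \<Rightarrow> rvec \<Rightarrow> real" where
  "lp_obj m n s xf xn = (\<Sum>j<m. scf s j * xf j) + (\<Sum>j<n. scn s j * xn j)"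

definition lp_optimal :: "nat \<Rightarrow> nat \<Rightarrow> nat \<Rightarrow> nat \<Rightarrow> scenario \<Rightarrow> rvec \<Rightarrow> rvec \<Rightarrow> bool" where
  "lp_optimal k l m n s xf xn \<longleftrightarrow>
     lp_feasible k l m n s xf xn \<and>
     (\<forall>zf zn. lp_feasible k l m n s zf zn \<longrightarrow> lp_obj m n s xf xn \<le> lp_obj m n s zf zn)"

definition weakly_optimal :: "nat \<Rightarrow> nat \<Rightarrow> nat \<Rightarrow> nat \<Rightarrow> ilp \<Rightarrow> rvec \<Rightarrow> rvec \<Rightarrow> bool" where
  "weakly_optimal k l m n P xf xn \<longleftrightarrow> (\<exists>s. in_Dp k l m n P s \<and> lp_optimal k l m n s xf xn)"

definition weakly_feasible :: "nat \<Rightarrow> nat \<Rightarrow> nat \<Rightarrow> nat \<Rightarrow> ilp \<Rightarrow> rvec \<Rightarrow> rvec \<Rightarrow> bool" where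
  "weakly_feasible k l m n P xf xn \<longleftrightarrow> (\<exists>s. in_Dp k l m n P s \<and> lp_feasible k l m n s xf xn)"

definition sign_vector :: "nat \<Rightarrow> rvec \<Rightarrow> bool" where
  "sign_vector k \<sigma> \<longleftrightarrow> (\<forall>i<k. \<sigma> i = -1 \<or> \<sigma> i = 1)"

definition colsum :: "nat \<Rightarrow> rmat \<Rightarrow> nat \<Rightarrow> real" where
  "colsum p M j = (\<Sum>i<p. M i j)"

definition testing_system ::
  "nat \<Rightarrow> nat \<Rightarrow> nat \<Rightarrow> nat \<Rightarrow> ilp \<Rightarrow> rvec \<Rightarrow> rvec \<Rightarrow> rvec \<Rightarrow>
   rmat \<Rightarrow> rmat \<Rightarrow> rvec \<Rightarrow> rmat \<Rightarrow> rmat \<Rightarrow> rvec \<Rightarrow> rvec \<Rightarrow> rvec \<Rightarrow> bool" where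
  "testing_system k l m n P xf xn \<sigma> Af' An' a' Bf' Bn' b' yf yn \<longleftrightarrow>
     in_diag_imat k m yf (IAf P) Af' \<and> in_diag_imat k n yf (IAn P) An' \<and> in_diag_ivec k yf (Ia P) a' \<and>
     in_diag_imat l m yn (IBf P) Bf' \<and> in_diag_imat l n yn (IBn P) Bn' \<and> in_diag_ivec l yn (Ib P) b' \<and>
     (\<forall>i<k. (\<Sum>j<m. Af' i j * xf j) + (\<Sum>j<n. An' i j * xn j) = a' i) \<and>
     (\<forall>i<l. (\<Sum>j<m. Bf' i j * xf j) + (\<Sum>j<n. Bn' i j * xn j) = b' i) \<and>
     (\<forall>j<m. fst (Icf P) j \<le> colsum k Af' j + colsum l Bf' j \<and>
            colsum k Af' j + colsum l Bf' j \<le> snd (Icf P) j) \<and>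
     (\<forall>j<n. xn j > 0 \<longrightarrow> fst (Icn P) j \<le> colsum k An' j + colsum l Bn' j \<and>
            colsum k An' j + colsum l Bn' j \<le> snd (Icn P) j) \<and>
     (\<forall>j<n. xn j = 0 \<longrightarrow> colsum k An' j + colsum l Bn' j \<le> snd (Icn P) j) \<and>
     (\<forall>i<l. yn i \<ge> 0) \<and>
     (\<forall>i<k. \<sigma> i * yf i \<ge> 0)"

definition constructed_scenario ::
  "nat \<Rightarrow> nat \<Rightarrow> nat \<Rightarrow> nat \<Rightarrow> ilp \<Rightarrow> rvec \<Rightarrow> rvec \<Rightarrow>
   rmat \<Rightarrow> rmat \<Rightarrow> rvec \<Rightarrow> rmat \<Rightarrow> rmat \<Rightarrow> rvec \<Rightarrow> rvec \<Rightarrow> rvec \<Rightarrow> scenario \<Rightarrow> bool" where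
  "constructed_scenario k l m n P xf xn Af' An' a' Bf' Bn' b' yf yn s \<longleftrightarrow>
     (\<forall>j<m. scf s j = colsum k Af' j + colsum l Bf' j) \<and>
     (\<forall>i<k. if yf i \<noteq> 0 then
              (\<forall>j<m. sAf s i j = Af' i j / yf i) \<and> (\<forall>j<n. sAn s i j = An' i j / yf i) \<and>
              sa s i = a' i / yf i
            else
              (\<Sum>j<m. sAf s i j * xf j) + (\<Sum>j<n. sAn s i j * xn j) = sa s i \<and>
              row_in_imat m (IAf P) i (sAf s) \<and> row_in_imat n (IAn P) i (sAn s) \<and>
              entry_in_ivec (Ia P) i (sa s)) \<and>
     (\<forall>i<l. if yn i > 0 then
              (\<forall>j<m. sBf s i j = Bf' i j / yn i) \<and> (\<forall>j<n. sBn s i j = Bn' i j / yn i) \<and>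
              sb s i = b' i / yn i
            else
              (\<Sum>j<m. sBf s i j * xf j) + (\<Sum>j<n. sBn s i j * xn j) \<ge> sb s i \<and>
              row_in_imat m (IBf P) i (sBf s) \<and> row_in_imat n (IBn P) i (sBn s) \<and>
              entry_in_ivec (Ib P) i (sb s)) \<and>
     (\<forall>j<n. scn s j = (if xn j = 0 then snd (Icn P) j else colsum k An' j + colsum l Bn' j))"

end

theory Submission
  imports Defs
begin

text \<open>For a fixed scenario \<open>s\<close>, a feasible \<open>x\<close> is optimal for \<open>LP(s)\<close> iff there are dual
  multipliers \<open>y\<^sup>f\<close> (free) and \<open>y\<^sup>n \<ge> 0\<close> that are dual feasible and complementary to \<open>x\<close>:
  sufficiency is weak duality, necessity follows from Farkas' lemma applied to the constraints
  active at \<open>x\<close>. Scaling the rows of \<open>s\<close> by these multipliers turns the bilinear optimality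
  conditions into the testing system, whose unknowns are the scaled data; fixing the sign
  pattern \<open>\<sigma>\<close> of \<open>y\<^sup>f\<close> makes it linear. Conversely, dividing a solution of the testing
  system back row by row (keeping a feasible row where the multiplier vanishes) yields a
  scenario in which the multipliers certify optimality of \<open>x\<close>.\<close>

definition dot_on :: "'j set \<Rightarrow> ('j \<Rightarrow> real) \<Rightarrow> ('j \<Rightarrow> real) \<Rightarrow> real" where
  "dot_on J u v = (\<Sum>j\<in>J. u j * v j)"

lemma dot_on_lin_right: "dot_on J u (\<lambda>j. a * v j + b * w j) = a * dot_on J u v + b * dot_on J u w"
  by (simp add: dot_on_def algebra_simps sum.distrib sum_distrib_left)

lemma dot_on_lin_left: "dot_on J (\<lambda>j. a * v j + b * w j) u = a * dot_on J v u + b * dot_on J w u"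
  by (simp add: dot_on_def algebra_simps sum.distrib sum_distrib_left)

definition in_cone :: "'i set \<Rightarrow> ('i \<Rightarrow> 'j \<Rightarrow> real) \<Rightarrow> 'j set \<Rightarrow> ('j \<Rightarrow> real) \<Rightarrow> bool" where
  "in_cone I G J c \<longleftrightarrow> (\<exists>w. (\<forall>i\<in>I. 0 \<le> w i) \<and> (\<forall>j\<in>J. c j = (\<Sum>i\<in>I. w i * G i j)))"

lemma in_cone_insert:
  assumes "q \<notin> I" "finite I" "in_cone I G J c"
  shows "in_cone (insert q I) G J c"
proof -
  obtain w where "\<forall>i\<in>I. 0 \<le> w i" "\<forall>j\<in>J. c j = (\<Sum>i\<in>I. w i * G i j)"
    using assms(3) unfolding in_cone_def by blast
  with assms(1,2) show ?thesis
    unfolding in_cone_def by (intro exI[of _ "w(q := 0)"]) (auto intro!: sum.cong)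
qed

text \<open>The projection of \<open>u\<close> along \<open>g\<close> onto the hyperplane orthogonal to \<open>d\<close>, scaled by
  \<open>-(g \<bullet> d)\<close> to avoid division.\<close>
definition project_along :: "'j set \<Rightarrow> ('j \<Rightarrow> real) \<Rightarrow> ('j \<Rightarrow> real) \<Rightarrow> ('j \<Rightarrow> real) \<Rightarrow> 'j \<Rightarrow> real" where
  "project_along J d g u = (\<lambda>j. dot_on J u d * g j + (- dot_on J g d) * u j)"

lemma in_cone_insert_of_projection:
  assumes "finite I" "q \<notin> I"
    and d: "\<forall>i\<in>I. 0 \<le> dot_on J (G i) d" "dot_on J c d < 0" "dot_on J (G q) d < 0"
    and "in_cone I (\<lambda>i. project_along J d (G q) (G i)) J (project_along J d (G q) c)"
  shows "in_cone (insert q I) G J c"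
proof -
  define t where "t = dot_on J (G q) d"
  obtain \<mu> where mu: "\<forall>i\<in>I. 0 \<le> \<mu> i"
    "\<forall>j\<in>J. project_along J d (G q) c j = (\<Sum>i\<in>I. \<mu> i * project_along J d (G q) (G i) j)"
    using assms(6) unfolding in_cone_def by blast
  define lq where "lq = ((\<Sum>i\<in>I. \<mu> i * dot_on J (G i) d) - dot_on J c d) / (- t)"
  have "0 \<le> (\<Sum>i\<in>I. \<mu> i * dot_on J (G i) d)" using mu d by (intro sum_nonneg) auto
  then have lq_nonneg: "0 \<le> lq" using d unfolding lq_def t_def by (intro divide_nonneg_pos) auto
  define w where "w = \<mu>(q := lq)"
  have "c j = (\<Sum>i\<in>insert q I. w i * G i j)" if j: "j \<in> J" for j
  proof -
    have "(\<Sum>i\<in>insert q I. w i * G i j) = lq * G q j + (\<Sum>i\<in>I. \<mu> i * G i j)"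
      using assms(1,2) unfolding w_def by (auto intro!: sum.cong)
    moreover have "dot_on J c d * G q j + (- t) * c j =
        (\<Sum>i\<in>I. \<mu> i * dot_on J (G i) d) * G q j + (- t) * (\<Sum>i\<in>I. \<mu> i * G i j)"
      using mu(2) j unfolding project_along_def t_def
      by (simp add: algebra_simps sum.distrib sum_distrib_left sum_distrib_right sum_subtractf sum_negf)
    ultimately show ?thesis
      using d(3) unfolding lq_def t_def by (simp add: field_simps)
  qed
  moreover have "\<forall>i\<in>insert q I. 0 \<le> w i" using mu lq_nonneg unfolding w_def by auto
  ultimately show ?thesis unfolding in_cone_def by blast
qed

lemma separation_insert_of_projection:
  assumes t: "dot_on J (G q) d < 0"
    and d': "\<forall>i\<in>I. 0 \<le> dot_on J (project_along J d (G q) (G i)) d'"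
      "dot_on J (project_along J d (G q) c) d' < 0"
  shows "\<exists>d''. (\<forall>i\<in>insert q I. 0 \<le> dot_on J (G i) d'') \<and> dot_on J c d'' < 0"
proof -
  define t where "t = dot_on J (G q) d"
  text \<open>Correct \<open>d'\<close> by a multiple of \<open>d\<close> so that it becomes orthogonal to \<open>G q\<close>.\<close>
  define d'' where "d'' = (\<lambda>j. 1 * d' j + (- dot_on J (G q) d' / t) * d j)"
  have d''_dot: "dot_on J u d'' = (dot_on J u d * dot_on J (G q) d' + (- t) * dot_on J u d') / (- t)" for u
    unfolding d''_def dot_on_lin_right using t unfolding t_def by (simp add: field_simps)
  have "0 \<le> dot_on J (G i) d''" if "i \<in> I" for i
    using d'(1) that t unfolding d''_dot project_along_def dot_on_lin_left t_def
    by (intro divide_nonneg_pos) auto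
  moreover have "dot_on J (G q) d'' = 0" unfolding d''_dot t_def by (simp add: algebra_simps)
  moreover have "dot_on J c d'' < 0"
    using d'(2) t unfolding d''_dot project_along_def dot_on_lin_left t_def by (intro divide_neg_pos) auto
  ultimately show ?thesis by (intro exI[of _ d'']) auto
qed

lemma farkas_alternative:
  fixes G :: "'i \<Rightarrow> 'j \<Rightarrow> real"
  assumes "finite I" "finite J" "\<not> in_cone I G J c"
  shows "\<exists>d. (\<forall>i\<in>I. 0 \<le> dot_on J (G i) d) \<and> dot_on J c d < 0"
  using assms
proof (induction I arbitrary: G c rule: finite_induct)
  case empty
  then obtain j where j: "j \<in> J" "c j \<noteq> 0" unfolding in_cone_def by auto
  have "0 < (\<Sum>j\<in>J. c j * c j)"
    using j empty.prems(1) by (intro sum_pos2[of _ j]) (auto simp: zero_less_mult_iff linorder_neq_iff)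
  then show ?case by (intro exI[of _ "\<lambda>j. - c j"]) (simp add: dot_on_def sum_negf)
next
  case (insert q I)
  have "\<not> in_cone I G J c"
    using in_cone_insert[OF insert.hyps(2,1)] insert.prems(2) by blast
  from insert.IH[OF insert.prems(1) this]
  obtain d where d: "\<forall>i\<in>I. 0 \<le> dot_on J (G i) d" "dot_on J c d < 0" by blast
  show ?case
  proof (cases "0 \<le> dot_on J (G q) d")
    case True
    with d show ?thesis by (intro exI[of _ d]) auto
  next
    case False
    then have "dot_on J (G q) d < 0" by simp
    then have "\<not> in_cone I (\<lambda>i. project_along J d (G q) (G i)) J (project_along J d (G q) c)"
      using in_cone_insert_of_projection[OF insert.hyps d] insert.prems(2) by blast
    from insert.IH[OF insert.prems(1) this] obtain d' where
      "\<forall>i\<in>I. 0 \<le> dot_on J (project_along J d (G q) (G i)) d'"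
      "dot_on J (project_along J d (G q) c) d' < 0"
      by blast
    with \<open>dot_on J (G q) d < 0\<close> show ?thesis by (rule separation_insert_of_projection)
  qed
qed

lemma farkas_lemma:
  fixes G :: "'i \<Rightarrow> 'j \<Rightarrow> real"
  assumes "finite I" "finite J"
    and "\<And>d. \<forall>i\<in>I. 0 \<le> dot_on J (G i) d \<Longrightarrow> 0 \<le> dot_on J c d"
  shows "in_cone I G J c"
proof (rule ccontr)
  assume "\<not> ?thesis"
  from farkas_alternative[OF assms(1,2) this]
  obtain d where "\<forall>i\<in>I. 0 \<le> dot_on J (G i) d" "dot_on J c d < 0" by blast
  with assms(3) show False by force
qed

lemma eventually_perturbation_pos:
  fixes p q :: "'a \<Rightarrow> real"
  assumes "finite R" "\<forall>r\<in>R. 0 < p r"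
  shows "\<forall>\<^sub>F e in at_right 0. \<forall>r\<in>R. 0 < p r + e * q r"
proof (rule eventually_ball_finite[OF assms(1)], intro ballI)
  fix r assume "r \<in> R"
  have "((\<lambda>e. p r + e * q r) \<longlongrightarrow> p r + 0 * q r) (at_right 0)"
    by (intro tendsto_intros)
  then show "\<forall>\<^sub>F e in at_right 0. 0 < p r + e * q r"
    using assms(2) \<open>r \<in> R\<close> by (intro order_tendstoD(1)) auto
qed

definition eq_row :: "nat \<Rightarrow> nat \<Rightarrow> scenario \<Rightarrow> nat \<Rightarrow> rvec \<Rightarrow> rvec \<Rightarrow> real" where
  "eq_row m n s i zf zn = (\<Sum>j<m. sAf s i j * zf j) + (\<Sum>j<n. sAn s i j * zn j)"

definition ineq_row :: "nat \<Rightarrow> nat \<Rightarrow> scenario \<Rightarrow> nat \<Rightarrow> rvec \<Rightarrow> rvec \<Rightarrow> real" where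
  "ineq_row m n s i zf zn = (\<Sum>j<m. sBf s i j * zf j) + (\<Sum>j<n. sBn s i j * zn j)"

lemma lp_feasible_iff_rows:
  "lp_feasible k l m n s zf zn \<longleftrightarrow>
     (\<forall>i<k. eq_row m n s i zf zn = sa s i) \<and> (\<forall>i<l. sb s i \<le> ineq_row m n s i zf zn) \<and>
     (\<forall>j<n. 0 \<le> zn j)"
  unfolding lp_feasible_def eq_row_def ineq_row_def by simp

lemma eq_row_affine:
  "eq_row m n s i (\<lambda>j. xf j + e * df j) (\<lambda>j. xn j + e * dn j) = eq_row m n s i xf xn + e * eq_row m n s i df dn"
  unfolding eq_row_def by (simp add: algebra_simps sum.distrib sum_distrib_left)

lemma ineq_row_affine:
  "ineq_row m n s i (\<lambda>j. xf j + e * df j) (\<lambda>j. xn j + e * dn j) = ineq_row m n s i xf xn + e * ineq_row m n s i df dn"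
  unfolding ineq_row_def by (simp add: algebra_simps sum.distrib sum_distrib_left)

lemma lp_obj_affine:
  "lp_obj m n s (\<lambda>j. xf j + e * df j) (\<lambda>j. xn j + e * dn j) = lp_obj m n s xf xn + e * lp_obj m n s df dn"
  unfolding lp_obj_def by (simp add: algebra_simps sum.distrib sum_distrib_left)

definition dual_cost_f :: "nat \<Rightarrow> nat \<Rightarrow> scenario \<Rightarrow> rvec \<Rightarrow> rvec \<Rightarrow> nat \<Rightarrow> real" where
  "dual_cost_f k l s yf yn j = (\<Sum>i<k. yf i * sAf s i j) + (\<Sum>i<l. yn i * sBf s i j)"

definition dual_cost_n :: "nat \<Rightarrow> nat \<Rightarrow> scenario \<Rightarrow> rvec \<Rightarrow> rvec \<Rightarrow> nat \<Rightarrow> real" where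
  "dual_cost_n k l s yf yn j = (\<Sum>i<k. yf i * sAn s i j) + (\<Sum>i<l. yn i * sBn s i j)"

text \<open>Dual feasibility of \<open>(yf, yn)\<close> together with complementary slackness with \<open>x\<close>.\<close>
definition dual_certificate ::
  "nat \<Rightarrow> nat \<Rightarrow> nat \<Rightarrow> nat \<Rightarrow> scenario \<Rightarrow> rvec \<Rightarrow> rvec \<Rightarrow> rvec \<Rightarrow> rvec \<Rightarrow> bool" where
  "dual_certificate k l m n s xf xn yf yn \<longleftrightarrow>
     (\<forall>i<l. 0 \<le> yn i \<and> (0 < yn i \<longrightarrow> ineq_row m n s i xf xn = sb s i)) \<and>
     (\<forall>j<m. dual_cost_f k l s yf yn j = scf s j) \<and>
     (\<forall>j<n. dual_cost_n k l s yf yn j \<le> scn s j \<and>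
            (xn j \<noteq> 0 \<longrightarrow> dual_cost_n k l s yf yn j = scn s j))"

lemma lp_obj_dual_decomposition:
  "lp_obj m n s zf zn =
     (\<Sum>i<k. yf i * eq_row m n s i zf zn) + (\<Sum>i<l. yn i * ineq_row m n s i zf zn) +
     (\<Sum>j<m. (scf s j - dual_cost_f k l s yf yn j) * zf j) +
     (\<Sum>j<n. (scn s j - dual_cost_n k l s yf yn j) * zn j)"
proof -
  have "(\<Sum>i<k. yf i * eq_row m n s i zf zn) =
      (\<Sum>j<m. (\<Sum>i<k. yf i * sAf s i j) * zf j) + (\<Sum>j<n. (\<Sum>i<k. yf i * sAn s i j) * zn j)"
    unfolding eq_row_def
    by (simp add: sum_distrib_left sum_distrib_right sum.distrib mult.assoc distrib_left
        sum.swap[of _ "{..<k}"])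
  moreover have "(\<Sum>i<l. yn i * ineq_row m n s i zf zn) =
      (\<Sum>j<m. (\<Sum>i<l. yn i * sBf s i j) * zf j) + (\<Sum>j<n. (\<Sum>i<l. yn i * sBn s i j) * zn j)"
    unfolding ineq_row_def
    by (simp add: sum_distrib_left sum_distrib_right sum.distrib mult.assoc distrib_left
        sum.swap[of _ "{..<l}"])
  ultimately show ?thesis
    unfolding lp_obj_def dual_cost_f_def dual_cost_n_def
    by (simp add: algebra_simps sum.distrib sum_subtractf)
qed

lemma lp_optimal_if_dual_certificate:
  assumes feas: "lp_feasible k l m n s xf xn"
    and cert: "dual_certificate k l m n s xf xn yf yn"
  shows "lp_optimal k l m n s xf xn"
proof -
  let ?dual_obj = "(\<Sum>i<k. yf i * sa s i) + (\<Sum>i<l. yn i * sb s i)"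
  have yn: "\<forall>i<l. 0 \<le> yn i \<and> (0 < yn i \<longrightarrow> ineq_row m n s i xf xn = sb s i)"
    and cf: "\<forall>j<m. dual_cost_f k l s yf yn j = scf s j"
    and cn: "\<forall>j<n. dual_cost_n k l s yf yn j \<le> scn s j \<and>
               (xn j \<noteq> 0 \<longrightarrow> dual_cost_n k l s yf yn j = scn s j)"
    using cert unfolding dual_certificate_def by auto
  have weak_duality: "?dual_obj \<le> lp_obj m n s zf zn" if "lp_feasible k l m n s zf zn" for zf zn
  proof -
    have "(\<Sum>i<l. yn i * sb s i) \<le> (\<Sum>i<l. yn i * ineq_row m n s i zf zn)"
      using that yn unfolding lp_feasible_iff_rows by (intro sum_mono mult_left_mono) auto
    moreover have "0 \<le> (\<Sum>j<n. (scn s j - dual_cost_n k l s yf yn j) * zn j)"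
      using that cn unfolding lp_feasible_iff_rows by (intro sum_nonneg) auto
    ultimately show ?thesis
      using that cf unfolding lp_obj_dual_decomposition[where k = k and l = l and yf = yf and yn = yn]
        lp_feasible_iff_rows by simp
  qed
  have complementary_slackness: "lp_obj m n s xf xn = ?dual_obj"
  proof -
    have "(\<Sum>i<l. yn i * ineq_row m n s i xf xn) = (\<Sum>i<l. yn i * sb s i)"
      using yn by (intro sum.cong) (auto simp: less_le)
    moreover have "(\<Sum>j<n. (scn s j - dual_cost_n k l s yf yn j) * xn j) = 0"
      using cn by (intro sum.neutral) auto
    ultimately show ?thesis
      using feas cf unfolding lp_obj_dual_decomposition[where k = k and l = l and yf = yf and yn = yn]
        lp_feasible_iff_rows by simp
  qed
  show ?thesis
    unfolding lp_optimal_def using feas weak_duality complementary_slackness by simp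
qed

lemma lp_optimal_no_descent_direction:
  assumes opt: "lp_optimal k l m n s xf xn"
    and eq_dir: "\<forall>i<k. eq_row m n s i df dn = 0"
    and active_dir: "\<forall>i<l. ineq_row m n s i xf xn = sb s i \<longrightarrow> 0 \<le> ineq_row m n s i df dn"
    and sign_dir: "\<forall>j<n. xn j = 0 \<longrightarrow> 0 \<le> dn j"
  shows "0 \<le> lp_obj m n s df dn"
proof -
  have feas: "lp_feasible k l m n s xf xn" using opt unfolding lp_optimal_def by simp
  define slack where "slack i = ineq_row m n s i xf xn - sb s i" for i
  define inactive where "inactive = {i. i < l \<and> slack i \<noteq> 0}"
  define positive where "positive = {j. j < n \<and> xn j \<noteq> 0}"
  have "\<forall>\<^sub>F e in at_right 0. \<forall>i\<in>inactive. 0 < slack i + e * ineq_row m n s i df dn"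
    using feas unfolding lp_feasible_iff_rows inactive_def slack_def
    by (intro eventually_perturbation_pos) (auto simp: less_le)
  moreover have "\<forall>\<^sub>F e in at_right 0. \<forall>j\<in>positive. 0 < xn j + e * dn j"
    using feas unfolding lp_feasible_iff_rows positive_def
    by (intro eventually_perturbation_pos) (auto simp: less_le)
  ultimately have "\<forall>\<^sub>F e in at_right 0. 0 < e \<and>
      (\<forall>i\<in>inactive. 0 < slack i + e * ineq_row m n s i df dn) \<and> (\<forall>j\<in>positive. 0 < xn j + e * dn j)"
    by (intro eventually_conj eventually_at_right_less)
  then obtain e where e: "0 < e" "\<forall>i\<in>inactive. 0 < slack i + e * ineq_row m n s i df dn"
    "\<forall>j\<in>positive. 0 < xn j + e * dn j"
    using eventually_happens'[OF trivial_limit_at_right_real] by blast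
  have "lp_feasible k l m n s (\<lambda>j. xf j + e * df j) (\<lambda>j. xn j + e * dn j)"
    unfolding lp_feasible_iff_rows eq_row_affine ineq_row_affine
  proof (intro conjI allI impI)
    fix i assume "i < k"
    then show "eq_row m n s i xf xn + e * eq_row m n s i df dn = sa s i"
      using feas eq_dir unfolding lp_feasible_iff_rows by simp
  next
    fix i assume i: "i < l"
    show "sb s i \<le> ineq_row m n s i xf xn + e * ineq_row m n s i df dn"
    proof (cases "slack i = 0")
      case True
      then show ?thesis using i active_dir e(1) unfolding slack_def by simp
    next
      case False
      then show ?thesis using i e(2) unfolding inactive_def slack_def by fastforce
    qed
  next
    fix j assume j: "j < n"
    show "0 \<le> xn j + e * dn j"
    proof (cases "xn j = 0")
      case True
      then show ?thesis using j sign_dir e(1) by simp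
    next
      case False
      then show ?thesis using j e(3) unfolding positive_def by fastforce
    qed
  qed
  then have "lp_obj m n s xf xn \<le> lp_obj m n s xf xn + e * lp_obj m n s df dn"
    using opt unfolding lp_optimal_def lp_obj_affine[symmetric] by blast
  with e(1) show ?thesis by (simp add: zero_le_mult_iff)
qed

lemma dot_on_Plus:
  fixes m n :: nat
  shows "dot_on ({..<m} <+> {..<n}) (case_sum u v) d = (\<Sum>j<m. u j * d (Inl j)) + (\<Sum>j<n. v j * d (Inr j))"
  unfolding dot_on_def by (subst sum.Plus) auto

text \<open>The constraints of \<open>LP(s)\<close> in the form \<open>g \<bullet> z \<ge> \<dots>\<close>, with \<open>z = (zf, zn)\<close>
  indexed by \<open>nat + nat\<close>; each equality row contributes \<open>g\<close> and \<open>-g\<close>.\<close>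
datatype lp_constraint = Eq_row nat | Eq_row_neg nat | Ineq_row nat | Sign_var nat

fun constraint_normal :: "scenario \<Rightarrow> lp_constraint \<Rightarrow> nat + nat \<Rightarrow> real" where
  "constraint_normal s (Eq_row i) = case_sum (sAf s i) (sAn s i)"
| "constraint_normal s (Eq_row_neg i) = case_sum (\<lambda>j. - sAf s i j) (\<lambda>j. - sAn s i j)"
| "constraint_normal s (Ineq_row i) = case_sum (sBf s i) (sBn s i)"
| "constraint_normal s (Sign_var t) = case_sum (\<lambda>_. 0) (\<lambda>j. if j = t then 1 else 0)"

lemma dot_on_constraint_normal:
  fixes m n :: nat
  defines "J \<equiv> {..<m} <+> {..<n}"
  shows "dot_on J (constraint_normal s (Eq_row i)) d = eq_row m n s i (d \<circ> Inl) (d \<circ> Inr)"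
    and "dot_on J (constraint_normal s (Eq_row_neg i)) d = - eq_row m n s i (d \<circ> Inl) (d \<circ> Inr)"
    and "dot_on J (constraint_normal s (Ineq_row i)) d = ineq_row m n s i (d \<circ> Inl) (d \<circ> Inr)"
    and "t < n \<Longrightarrow> dot_on J (constraint_normal s (Sign_var t)) d = d (Inr t)"
  unfolding J_def by (simp_all add: dot_on_Plus eq_row_def ineq_row_def sum_negf
      if_distrib[of "\<lambda>x. x * _"] cong: if_cong)

lemma sum_lp_constraints:
  assumes "finite A" "finite B" "finite C" "finite D"
  shows "(\<Sum>c\<in>Eq_row ` A \<union> Eq_row_neg ` B \<union> Ineq_row ` C \<union> Sign_var ` D. f c) =
    (\<Sum>i\<in>A. f (Eq_row i)) + (\<Sum>i\<in>B. f (Eq_row_neg i)) + (\<Sum>i\<in>C. f (Ineq_row i)) +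
    (\<Sum>j\<in>D. (f (Sign_var j) :: real))"
  using assms by (subst sum.union_disjoint, force, force, force)+ (simp add: sum.reindex inj_on_def)

definition active_constraints ::
  "nat \<Rightarrow> nat \<Rightarrow> nat \<Rightarrow> nat \<Rightarrow> scenario \<Rightarrow> rvec \<Rightarrow> rvec \<Rightarrow> lp_constraint set" where
  "active_constraints k l m n s xf xn =
     Eq_row ` {..<k} \<union> Eq_row_neg ` {..<k} \<union>
     Ineq_row ` {i \<in> {..<l}. ineq_row m n s i xf xn = sb s i} \<union> Sign_var ` {j \<in> {..<n}. xn j = 0}"

lemma lp_optimal_imp_cost_in_active_cone:
  assumes opt: "lp_optimal k l m n s xf xn"
  shows "in_cone (active_constraints k l m n s xf xn) (constraint_normal s) ({..<m} <+> {..<n})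
           (case_sum (scf s) (scn s))"
proof (rule farkas_lemma)
  let ?I = "active_constraints k l m n s xf xn" and ?J = "{..<m} <+> {..<n}"
  show "finite ?I" "finite ?J" unfolding active_constraints_def by auto
  fix d assume d: "\<forall>c\<in>?I. 0 \<le> dot_on ?J (constraint_normal s c) d"
  have "eq_row m n s i (d \<circ> Inl) (d \<circ> Inr) = 0" if "i < k" for i
  proof -
    have "Eq_row i \<in> ?I" "Eq_row_neg i \<in> ?I" using that unfolding active_constraints_def by auto
    with d have "0 \<le> dot_on ?J (constraint_normal s (Eq_row i)) d"
      "0 \<le> dot_on ?J (constraint_normal s (Eq_row_neg i)) d" by blast+
    then show ?thesis unfolding dot_on_constraint_normal by simp
  qed
  moreover have "0 \<le> ineq_row m n s i (d \<circ> Inl) (d \<circ> Inr)"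
    if "i < l" "ineq_row m n s i xf xn = sb s i" for i
  proof -
    have "Ineq_row i \<in> ?I" using that unfolding active_constraints_def by auto
    with d have "0 \<le> dot_on ?J (constraint_normal s (Ineq_row i)) d" by blast
    then show ?thesis unfolding dot_on_constraint_normal .
  qed
  moreover have "0 \<le> d (Inr j)" if "j < n" "xn j = 0" for j
  proof -
    have "Sign_var j \<in> ?I" using that unfolding active_constraints_def by auto
    with d have "0 \<le> dot_on ?J (constraint_normal s (Sign_var j)) d" by blast
    then show ?thesis unfolding dot_on_constraint_normal(4)[OF \<open>j < n\<close>] .
  qed
  ultimately show "0 \<le> dot_on ?J (case_sum (scf s) (scn s)) d"
    using lp_optimal_no_descent_direction[OF opt, of "d \<circ> Inl" "d \<circ> Inr"]
    unfolding dot_on_Plus lp_obj_def by simp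
qed

text \<open>The multipliers of an active inequality row and of an active sign constraint are the
  dual variable \<open>yn i\<close> and the reduced cost of \<open>xn j\<close>, respectively.\<close>
lemma active_cone_costs:
  fixes k l m n :: nat and s :: scenario and xf xn :: rvec and w :: "lp_constraint \<Rightarrow> real"
  defines "yf \<equiv> \<lambda>i. w (Eq_row i) - w (Eq_row_neg i)"
    and "yn \<equiv> \<lambda>i. if i < l \<and> ineq_row m n s i xf xn = sb s i then w (Ineq_row i) else 0"
  assumes comb: "\<forall>j\<in>{..<m} <+> {..<n}. case_sum (scf s) (scn s) j =
    (\<Sum>c\<in>active_constraints k l m n s xf xn. w c * constraint_normal s c j)"
  shows "\<forall>j<m. scf s j = dual_cost_f k l s yf yn j"
    and "\<forall>j<n. scn s j = dual_cost_n k l s yf yn j + (if xn j = 0 then w (Sign_var j) else 0)"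
proof -
  define active where "active = {i \<in> {..<l}. ineq_row m n s i xf xn = sb s i}"
  define zero where "zero = {j \<in> {..<n}. xn j = 0}"
  have fin: "finite active" "finite zero" unfolding active_def zero_def by auto
  have I_eq: "active_constraints k l m n s xf xn =
      Eq_row ` {..<k} \<union> Eq_row_neg ` {..<k} \<union> Ineq_row ` active \<union> Sign_var ` zero"
    unfolding active_constraints_def active_def zero_def ..
  note sum_I = sum_lp_constraints[of "{..<k}" "{..<k}", OF finite_lessThan finite_lessThan fin,
      folded I_eq]
  have sum_active: "(\<Sum>i\<in>active. w (Ineq_row i) * g i) = (\<Sum>i<l. yn i * g i)" for g
    unfolding yn_def by (rule sum.mono_neutral_cong_left) (auto simp: active_def)
  show "\<forall>j<m. scf s j = dual_cost_f k l s yf yn j"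
  proof (intro allI impI)
    fix j assume "j < m"
    then have "scf s j = (\<Sum>c\<in>active_constraints k l m n s xf xn. w c * constraint_normal s c (Inl j))"
      using comb by force
    also have "\<dots> = (\<Sum>i<k. w (Eq_row i) * sAf s i j) - (\<Sum>i<k. w (Eq_row_neg i) * sAf s i j) +
        (\<Sum>i\<in>active. w (Ineq_row i) * sBf s i j)"
      unfolding sum_I by (simp add: sum_negf)
    also have "\<dots> = dual_cost_f k l s yf yn j"
      unfolding dual_cost_f_def yf_def sum_active by (simp add: left_diff_distrib sum_subtractf)
    finally show "scf s j = dual_cost_f k l s yf yn j" .
  qed
  show "\<forall>j<n. scn s j = dual_cost_n k l s yf yn j + (if xn j = 0 then w (Sign_var j) else 0)"
  proof (intro allI impI)
    fix j assume j: "j < n"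
    then have "scn s j = (\<Sum>c\<in>active_constraints k l m n s xf xn. w c * constraint_normal s c (Inr j))"
      using comb by force
    also have "\<dots> = (\<Sum>i<k. w (Eq_row i) * sAn s i j) - (\<Sum>i<k. w (Eq_row_neg i) * sAn s i j) +
        (\<Sum>i\<in>active. w (Ineq_row i) * sBn s i j) + (\<Sum>t\<in>zero. if t = j then w (Sign_var t) else 0)"
      unfolding sum_I by (simp add: sum_negf if_distrib[of "\<lambda>x. _ * x"] eq_commute cong: if_cong)
    also have "\<dots> = dual_cost_n k l s yf yn j + (if xn j = 0 then w (Sign_var j) else 0)"
      using j unfolding dual_cost_n_def yf_def sum_active zero_def
      by (simp add: left_diff_distrib sum_subtractf)
    finally show "scn s j = dual_cost_n k l s yf yn j + (if xn j = 0 then w (Sign_var j) else 0)" .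
  qed
qed

lemma dual_certificate_of_active_cone:
  assumes "in_cone (active_constraints k l m n s xf xn) (constraint_normal s) ({..<m} <+> {..<n})
             (case_sum (scf s) (scn s))"
  shows "\<exists>yf yn. dual_certificate k l m n s xf xn yf yn"
proof -
  obtain w where w_nonneg: "\<forall>c\<in>active_constraints k l m n s xf xn. 0 \<le> w c"
    and comb: "\<forall>j\<in>{..<m} <+> {..<n}. case_sum (scf s) (scn s) j =
      (\<Sum>c\<in>active_constraints k l m n s xf xn. w c * constraint_normal s c j)"
    using assms unfolding in_cone_def by blast
  define yf where "yf i = w (Eq_row i) - w (Eq_row_neg i)" for i
  define yn where "yn i = (if i < l \<and> ineq_row m n s i xf xn = sb s i then w (Ineq_row i) else 0)" for i
  note costs = active_cone_costs[OF comb, folded yf_def yn_def]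
  have "dual_certificate k l m n s xf xn yf yn"
    unfolding dual_certificate_def
  proof (intro conjI allI impI)
    fix i assume "i < l"
    then show "0 \<le> yn i" using w_nonneg unfolding yn_def active_constraints_def by auto
    show "ineq_row m n s i xf xn = sb s i" if "0 < yn i"
      using that unfolding yn_def by (auto split: if_splits)
  next
    fix j assume "j < m"
    then show "dual_cost_f k l s yf yn j = scf s j" using costs(1) by simp
  next
    fix j assume j: "j < n"
    then have "0 \<le> (if xn j = 0 then w (Sign_var j) else 0)"
      using w_nonneg unfolding active_constraints_def by auto
    with costs(2) j show "dual_cost_n k l s yf yn j \<le> scn s j" by simp
    show "dual_cost_n k l s yf yn j = scn s j" if "xn j \<noteq> 0"
      using costs(2) j that by simp
  qed
  then show ?thesis by blast
qed

lemma lp_optimal_iff_dual_certificate: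
  "lp_optimal k l m n s xf xn \<longleftrightarrow>
     lp_feasible k l m n s xf xn \<and> (\<exists>yf yn. dual_certificate k l m n s xf xn yf yn)"
proof
  assume "lp_optimal k l m n s xf xn"
  then show "lp_feasible k l m n s xf xn \<and> (\<exists>yf yn. dual_certificate k l m n s xf xn yf yn)"
    using dual_certificate_of_active_cone[OF lp_optimal_imp_cost_in_active_cone]
    unfolding lp_optimal_def by blast
qed (use lp_optimal_if_dual_certificate in blast)

lemma eq_row_scaled:
  assumes "\<forall>j<m. Af' i j = y * sAf s i j" "\<forall>j<n. An' i j = y * sAn s i j"
  shows "(\<Sum>j<m. Af' i j * xf j) + (\<Sum>j<n. An' i j * xn j) = y * eq_row m n s i xf xn"
  using assms unfolding eq_row_def by (simp add: distrib_left sum_distrib_left mult.assoc)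

lemma ineq_row_scaled:
  assumes "\<forall>j<m. Bf' i j = y * sBf s i j" "\<forall>j<n. Bn' i j = y * sBn s i j"
  shows "(\<Sum>j<m. Bf' i j * xf j) + (\<Sum>j<n. Bn' i j * xn j) = y * ineq_row m n s i xf xn"
  using assms unfolding ineq_row_def by (simp add: distrib_left sum_distrib_left mult.assoc)

lemma colsum_scaled:
  assumes "\<forall>i<p. M' i j = y i * M i j"
  shows "colsum p M' j = (\<Sum>i<p. y i * M i j)"
  using assms unfolding colsum_def by simp

lemma testing_system_if_dual_certificate:
  assumes inD: "in_Dp k l m n P s" and feas: "lp_feasible k l m n s xf xn"
    and cert: "dual_certificate k l m n s xf xn yf yn"
  shows "testing_system k l m n P xf xn (\<lambda>i. if 0 \<le> yf i then 1 else -1)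
     (\<lambda>i j. yf i * sAf s i j) (\<lambda>i j. yf i * sAn s i j) (\<lambda>i. yf i * sa s i)
     (\<lambda>i j. yn i * sBf s i j) (\<lambda>i j. yn i * sBn s i j) (\<lambda>i. yn i * sb s i) yf yn"
proof -
  have yn: "\<forall>i<l. 0 \<le> yn i \<and> (0 < yn i \<longrightarrow> ineq_row m n s i xf xn = sb s i)"
    and cf: "\<forall>j<m. dual_cost_f k l s yf yn j = scf s j"
    and cn: "\<forall>j<n. dual_cost_n k l s yf yn j \<le> scn s j \<and>
               (xn j \<noteq> 0 \<longrightarrow> dual_cost_n k l s yf yn j = scn s j)"
    using cert unfolding dual_certificate_def by auto
  have Icn: "fst (Icn P) j \<le> scn s j \<and> scn s j \<le> snd (Icn P) j" if "j < n" for j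
    using inD that unfolding in_Dp_def in_ivec_def by auto
  show ?thesis
    unfolding testing_system_def
  proof (intro conjI)
    show "in_diag_imat k m yf (IAf P) (\<lambda>i j. yf i * sAf s i j)"
      "in_diag_imat k n yf (IAn P) (\<lambda>i j. yf i * sAn s i j)"
      "in_diag_ivec k yf (Ia P) (\<lambda>i. yf i * sa s i)"
      "in_diag_imat l m yn (IBf P) (\<lambda>i j. yn i * sBf s i j)"
      "in_diag_imat l n yn (IBn P) (\<lambda>i j. yn i * sBn s i j)"
      "in_diag_ivec l yn (Ib P) (\<lambda>i. yn i * sb s i)"
      using inD unfolding in_Dp_def in_diag_imat_def in_diag_ivec_def by blast+
    show "\<forall>i<k. (\<Sum>j<m. yf i * sAf s i j * xf j) + (\<Sum>j<n. yf i * sAn s i j * xn j) = yf i * sa s i"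
    proof (intro allI impI)
      fix i assume "i < k"
      then have "yf i * eq_row m n s i xf xn = yf i * sa s i"
        using feas unfolding lp_feasible_iff_rows by simp
      then show "(\<Sum>j<m. yf i * sAf s i j * xf j) + (\<Sum>j<n. yf i * sAn s i j * xn j) = yf i * sa s i"
        unfolding eq_row_def by (simp add: distrib_left sum_distrib_left mult.assoc)
    qed
    show "\<forall>i<l. (\<Sum>j<m. yn i * sBf s i j * xf j) + (\<Sum>j<n. yn i * sBn s i j * xn j) = yn i * sb s i"
    proof (intro allI impI)
      fix i assume "i < l"
      then have "yn i * ineq_row m n s i xf xn = yn i * sb s i"
        using yn by (cases "yn i = 0") (auto simp: less_le)
      then show "(\<Sum>j<m. yn i * sBf s i j * xf j) + (\<Sum>j<n. yn i * sBn s i j * xn j) = yn i * sb s i"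
        unfolding ineq_row_def by (simp add: distrib_left sum_distrib_left mult.assoc)
    qed
    show "\<forall>j<m. fst (Icf P) j \<le> colsum k (\<lambda>i j. yf i * sAf s i j) j + colsum l (\<lambda>i j. yn i * sBf s i j) j \<and>
        colsum k (\<lambda>i j. yf i * sAf s i j) j + colsum l (\<lambda>i j. yn i * sBf s i j) j \<le> snd (Icf P) j"
      using inD cf unfolding in_Dp_def in_ivec_def colsum_def dual_cost_f_def by simp
    show "\<forall>j<n. 0 < xn j \<longrightarrow>
        fst (Icn P) j \<le> colsum k (\<lambda>i j. yf i * sAn s i j) j + colsum l (\<lambda>i j. yn i * sBn s i j) j \<and>
        colsum k (\<lambda>i j. yf i * sAn s i j) j + colsum l (\<lambda>i j. yn i * sBn s i j) j \<le> snd (Icn P) j"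
      using Icn cn unfolding colsum_def dual_cost_n_def by auto
    show "\<forall>j<n. xn j = 0 \<longrightarrow>
        colsum k (\<lambda>i j. yf i * sAn s i j) j + colsum l (\<lambda>i j. yn i * sBn s i j) j \<le> snd (Icn P) j"
      using Icn cn unfolding colsum_def dual_cost_n_def by (meson order_trans)
    show "\<forall>i<l. 0 \<le> yn i" using yn by simp
    show "\<forall>i<k. 0 \<le> (if 0 \<le> yf i then 1 else -1) * yf i" by simp
  qed
qed

lemma in_diag_imat_zero_row:
  "in_diag_imat p q y M A' \<Longrightarrow> i < p \<Longrightarrow> j < q \<Longrightarrow> y i = 0 \<Longrightarrow> A' i j = 0"
  unfolding in_diag_imat_def by force

lemma in_diag_ivec_zero_entry: "in_diag_ivec p y v a' \<Longrightarrow> i < p \<Longrightarrow> y i = 0 \<Longrightarrow> a' i = 0"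
  unfolding in_diag_ivec_def by force

lemma in_diag_imat_div:
  "in_diag_imat p q y M A' \<Longrightarrow> i < p \<Longrightarrow> j < q \<Longrightarrow> y i \<noteq> 0 \<Longrightarrow>
     fst M i j \<le> A' i j / y i \<and> A' i j / y i \<le> snd M i j"
  unfolding in_diag_imat_def in_imat_def by force

lemma in_diag_ivec_div:
  "in_diag_ivec p y v a' \<Longrightarrow> i < p \<Longrightarrow> y i \<noteq> 0 \<Longrightarrow> fst v i \<le> a' i / y i \<and> a' i / y i \<le> snd v i"
  unfolding in_diag_ivec_def in_ivec_def by force

lemma constructed_scenario_scaling:
  assumes ts: "testing_system k l m n P xf xn \<sigma> Af' An' a' Bf' Bn' b' yf yn"
    and cs: "constructed_scenario k l m n P xf xn Af' An' a' Bf' Bn' b' yf yn s"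
  shows "\<forall>i<k. (\<forall>j<m. Af' i j = yf i * sAf s i j) \<and> (\<forall>j<n. An' i j = yf i * sAn s i j) \<and>
           a' i = yf i * sa s i"
    and "\<forall>i<l. (\<forall>j<m. Bf' i j = yn i * sBf s i j) \<and> (\<forall>j<n. Bn' i j = yn i * sBn s i j) \<and>
           b' i = yn i * sb s i"
proof -
  have diag: "in_diag_imat k m yf (IAf P) Af'" "in_diag_imat k n yf (IAn P) An'"
    "in_diag_ivec k yf (Ia P) a'" "in_diag_imat l m yn (IBf P) Bf'"
    "in_diag_imat l n yn (IBn P) Bn'" "in_diag_ivec l yn (Ib P) b'"
    and yn: "\<forall>i<l. 0 \<le> yn i"
    using ts unfolding testing_system_def by simp_all
  have cs_A: "\<forall>i<k. yf i \<noteq> 0 \<longrightarrow> (\<forall>j<m. sAf s i j = Af' i j / yf i) \<and>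
      (\<forall>j<n. sAn s i j = An' i j / yf i) \<and> sa s i = a' i / yf i"
    and cs_B: "\<forall>i<l. 0 < yn i \<longrightarrow> (\<forall>j<m. sBf s i j = Bf' i j / yn i) \<and>
      (\<forall>j<n. sBn s i j = Bn' i j / yn i) \<and> sb s i = b' i / yn i"
    using cs unfolding constructed_scenario_def by (simp_all split: if_splits)
  have "(\<forall>j<m. Af' i j = yf i * sAf s i j) \<and> (\<forall>j<n. An' i j = yf i * sAn s i j) \<and>
      a' i = yf i * sa s i" if "i < k" for i
  proof (cases "yf i = 0")
    case True
    then show ?thesis
      using that in_diag_imat_zero_row[OF diag(1)] in_diag_imat_zero_row[OF diag(2)]
        in_diag_ivec_zero_entry[OF diag(3)] by simp
  next
    case False
    then show ?thesis using cs_A that by simp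
  qed
  moreover have "(\<forall>j<m. Bf' i j = yn i * sBf s i j) \<and> (\<forall>j<n. Bn' i j = yn i * sBn s i j) \<and>
      b' i = yn i * sb s i" if "i < l" for i
  proof (cases "yn i = 0")
    case True
    then show ?thesis
      using that in_diag_imat_zero_row[OF diag(4)] in_diag_imat_zero_row[OF diag(5)]
        in_diag_ivec_zero_entry[OF diag(6)] by simp
  next
    case False
    then show ?thesis using cs_B yn that by (simp add: less_le)
  qed
  ultimately show "\<forall>i<k. (\<forall>j<m. Af' i j = yf i * sAf s i j) \<and> (\<forall>j<n. An' i j = yf i * sAn s i j) \<and>
           a' i = yf i * sa s i"
    and "\<forall>i<l. (\<forall>j<m. Bf' i j = yn i * sBf s i j) \<and> (\<forall>j<n. Bn' i j = yn i * sBn s i j) \<and>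
           b' i = yn i * sb s i"
    by blast+
qed

lemma constructed_scenario_in_Dp:
  assumes wf: "ilp_wf k l m n P" and xn: "\<forall>j<n. 0 \<le> xn j"
    and ts: "testing_system k l m n P xf xn \<sigma> Af' An' a' Bf' Bn' b' yf yn"
    and cs: "constructed_scenario k l m n P xf xn Af' An' a' Bf' Bn' b' yf yn s"
  shows "in_Dp k l m n P s"
proof -
  have diag: "in_diag_imat k m yf (IAf P) Af'" "in_diag_imat k n yf (IAn P) An'"
    "in_diag_ivec k yf (Ia P) a'" "in_diag_imat l m yn (IBf P) Bf'"
    "in_diag_imat l n yn (IBn P) Bn'" "in_diag_ivec l yn (Ib P) b'"
    using ts unfolding testing_system_def by simp_all
  have cs_A: "\<forall>i<k. if yf i \<noteq> 0 then
              (\<forall>j<m. sAf s i j = Af' i j / yf i) \<and> (\<forall>j<n. sAn s i j = An' i j / yf i) \<and>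
              sa s i = a' i / yf i
            else
              row_in_imat m (IAf P) i (sAf s) \<and> row_in_imat n (IAn P) i (sAn s) \<and>
              entry_in_ivec (Ia P) i (sa s)"
    and cs_B: "\<forall>i<l. if yn i > 0 then
              (\<forall>j<m. sBf s i j = Bf' i j / yn i) \<and> (\<forall>j<n. sBn s i j = Bn' i j / yn i) \<and>
              sb s i = b' i / yn i
            else
              row_in_imat m (IBf P) i (sBf s) \<and> row_in_imat n (IBn P) i (sBn s) \<and>
              entry_in_ivec (Ib P) i (sb s)"
    using cs unfolding constructed_scenario_def by (simp_all split: if_splits)
  show ?thesis
    unfolding in_Dp_def in_imat_def in_ivec_def
  proof (intro conjI; intro allI impI)
    fix i j assume "i < k" "j < m"
    then show "fst (IAf P) i j \<le> sAf s i j \<and> sAf s i j \<le> snd (IAf P) i j"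
      using cs_A in_diag_imat_div[OF diag(1)] unfolding row_in_imat_def by (cases "yf i = 0") auto
  next
    fix i j assume "i < k" "j < n"
    then show "fst (IAn P) i j \<le> sAn s i j \<and> sAn s i j \<le> snd (IAn P) i j"
      using cs_A in_diag_imat_div[OF diag(2)] unfolding row_in_imat_def by (cases "yf i = 0") auto
  next
    fix i assume "i < k"
    then show "fst (Ia P) i \<le> sa s i \<and> sa s i \<le> snd (Ia P) i"
      using cs_A in_diag_ivec_div[OF diag(3)] unfolding entry_in_ivec_def by (cases "yf i = 0") auto
  next
    fix i j assume "i < l" "j < m"
    then show "fst (IBf P) i j \<le> sBf s i j \<and> sBf s i j \<le> snd (IBf P) i j"
      using cs_B in_diag_imat_div[OF diag(4)] unfolding row_in_imat_def by (cases "yn i > 0") auto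
  next
    fix i j assume "i < l" "j < n"
    then show "fst (IBn P) i j \<le> sBn s i j \<and> sBn s i j \<le> snd (IBn P) i j"
      using cs_B in_diag_imat_div[OF diag(5)] unfolding row_in_imat_def by (cases "yn i > 0") auto
  next
    fix i assume "i < l"
    then show "fst (Ib P) i \<le> sb s i \<and> sb s i \<le> snd (Ib P) i"
      using cs_B in_diag_ivec_div[OF diag(6)] unfolding entry_in_ivec_def by (cases "yn i > 0") auto
  next
    fix j assume "j < m"
    then show "fst (Icf P) j \<le> scf s j \<and> scf s j \<le> snd (Icf P) j"
      using ts cs unfolding testing_system_def constructed_scenario_def by simp
  next
    fix j assume j: "j < n"
    show "fst (Icn P) j \<le> scn s j \<and> scn s j \<le> snd (Icn P) j"
    proof (cases "xn j = 0")
      case True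
      then show ?thesis using cs wf j unfolding constructed_scenario_def ilp_wf_def ivec_wf_def by simp
    next
      case False
      then have "0 < xn j" using xn j by (simp add: less_le)
      then show ?thesis using ts cs j False unfolding testing_system_def constructed_scenario_def by simp
    qed
  qed
qed

lemma constructed_scenario_scaled_system:
  assumes ts: "testing_system k l m n P xf xn \<sigma> Af' An' a' Bf' Bn' b' yf yn"
    and cs: "constructed_scenario k l m n P xf xn Af' An' a' Bf' Bn' b' yf yn s"
  shows "\<forall>i<k. yf i * eq_row m n s i xf xn = yf i * sa s i"
    and "\<forall>i<l. yn i * ineq_row m n s i xf xn = yn i * sb s i"
    and "\<forall>j<m. dual_cost_f k l s yf yn j = scf s j"
    and "\<forall>j<n. dual_cost_n k l s yf yn j = colsum k An' j + colsum l Bn' j"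
proof -
  note scaling = constructed_scenario_scaling[OF ts cs]
  show "\<forall>i<k. yf i * eq_row m n s i xf xn = yf i * sa s i"
    using ts scaling(1) eq_row_scaled[of m Af' _ "yf _" s n An' xf xn]
    unfolding testing_system_def by force
  show "\<forall>i<l. yn i * ineq_row m n s i xf xn = yn i * sb s i"
    using ts scaling(2) ineq_row_scaled[of m Bf' _ "yn _" s n Bn' xf xn]
    unfolding testing_system_def by force
  show "\<forall>j<m. dual_cost_f k l s yf yn j = scf s j"
    using cs scaling colsum_scaled[of k Af' _ yf "sAf s"] colsum_scaled[of l Bf' _ yn "sBf s"]
    unfolding constructed_scenario_def dual_cost_f_def by simp
  show "\<forall>j<n. dual_cost_n k l s yf yn j = colsum k An' j + colsum l Bn' j"
    using scaling colsum_scaled[of k An' _ yf "sAn s"] colsum_scaled[of l Bn' _ yn "sBn s"]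
    unfolding dual_cost_n_def by simp
qed

lemma constructed_scenario_feasible:
  assumes xn: "\<forall>j<n. 0 \<le> xn j"
    and ts: "testing_system k l m n P xf xn \<sigma> Af' An' a' Bf' Bn' b' yf yn"
    and cs: "constructed_scenario k l m n P xf xn Af' An' a' Bf' Bn' b' yf yn s"
  shows "lp_feasible k l m n s xf xn"
proof -
  note scaled = constructed_scenario_scaled_system[OF ts cs]
  have "\<forall>i<k. yf i = 0 \<longrightarrow> eq_row m n s i xf xn = sa s i"
    and "\<forall>i<l. \<not> 0 < yn i \<longrightarrow> sb s i \<le> ineq_row m n s i xf xn"
    using cs unfolding constructed_scenario_def eq_row_def ineq_row_def by (simp_all split: if_splits)
  then show ?thesis
    using xn scaled(1,2) unfolding lp_feasible_iff_rows by (metis less_le_not_le mult_left_cancel order.refl)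
qed

lemma constructed_scenario_dual_certificate:
  assumes ts: "testing_system k l m n P xf xn \<sigma> Af' An' a' Bf' Bn' b' yf yn"
    and cs: "constructed_scenario k l m n P xf xn Af' An' a' Bf' Bn' b' yf yn s"
  shows "dual_certificate k l m n s xf xn yf yn"
  using ts cs constructed_scenario_scaled_system[OF ts cs]
  unfolding dual_certificate_def testing_system_def constructed_scenario_def
  by auto

lemma constructed_scenario_optimal:
  assumes wf: "ilp_wf k l m n P" and wfeas: "weakly_feasible k l m n P xf xn"
    and ts: "testing_system k l m n P xf xn \<sigma> Af' An' a' Bf' Bn' b' yf yn"
    and cs: "constructed_scenario k l m n P xf xn Af' An' a' Bf' Bn' b' yf yn s"
  shows "in_Dp k l m n P s \<and> lp_optimal k l m n s xf xn"
proof -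
  have xn: "\<forall>j<n. 0 \<le> xn j"
    using wfeas unfolding weakly_feasible_def lp_feasible_def by blast
  show ?thesis
    using constructed_scenario_in_Dp[OF wf xn ts cs]
      lp_optimal_if_dual_certificate[OF constructed_scenario_feasible[OF xn ts cs]
        constructed_scenario_dual_certificate[OF ts cs]]
    by blast
qed

text \<open>Rows with a zero multiplier are copied from any scenario in which \<open>x\<close> is feasible.\<close>
lemma constructed_scenario_exists:
  assumes "weakly_feasible k l m n P xf xn"
  shows "\<exists>s. constructed_scenario k l m n P xf xn Af' An' a' Bf' Bn' b' yf yn s"
proof -
  from assms obtain s0 where s0: "in_Dp k l m n P s0" "lp_feasible k l m n s0 xf xn"
    unfolding weakly_feasible_def by blast
  define s where "s = \<lparr>sAf = (\<lambda>i j. if yf i \<noteq> 0 then Af' i j / yf i else sAf s0 i j),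
    sAn = (\<lambda>i j. if yf i \<noteq> 0 then An' i j / yf i else sAn s0 i j),
    sBf = (\<lambda>i j. if yn i > 0 then Bf' i j / yn i else sBf s0 i j),
    sBn = (\<lambda>i j. if yn i > 0 then Bn' i j / yn i else sBn s0 i j),
    sa = (\<lambda>i. if yf i \<noteq> 0 then a' i / yf i else sa s0 i),
    sb = (\<lambda>i. if yn i > 0 then b' i / yn i else sb s0 i),
    scf = (\<lambda>j. colsum k Af' j + colsum l Bf' j),
    scn = (\<lambda>j. if xn j = 0 then snd (Icn P) j else colsum k An' j + colsum l Bn' j)\<rparr>"
  have "constructed_scenario k l m n P xf xn Af' An' a' Bf' Bn' b' yf yn s"
    unfolding constructed_scenario_def
  proof (intro conjI allI impI)
    fix i assume "i < k"
    with s0 show "if yf i \<noteq> 0 then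
        (\<forall>j<m. sAf s i j = Af' i j / yf i) \<and> (\<forall>j<n. sAn s i j = An' i j / yf i) \<and>
        sa s i = a' i / yf i
      else
        (\<Sum>j<m. sAf s i j * xf j) + (\<Sum>j<n. sAn s i j * xn j) = sa s i \<and>
        row_in_imat m (IAf P) i (sAf s) \<and> row_in_imat n (IAn P) i (sAn s) \<and>
        entry_in_ivec (Ia P) i (sa s)"
      unfolding s_def in_Dp_def in_imat_def in_ivec_def row_in_imat_def entry_in_ivec_def
        lp_feasible_def by simp
  next
    fix i assume "i < l"
    with s0 show "if yn i > 0 then
        (\<forall>j<m. sBf s i j = Bf' i j / yn i) \<and> (\<forall>j<n. sBn s i j = Bn' i j / yn i) \<and>
        sb s i = b' i / yn i
      else
        (\<Sum>j<m. sBf s i j * xf j) + (\<Sum>j<n. sBn s i j * xn j) \<ge> sb s i \<and>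
        row_in_imat m (IBf P) i (sBf s) \<and> row_in_imat n (IBn P) i (sBn s) \<and>
        entry_in_ivec (Ib P) i (sb s)"
      unfolding s_def in_Dp_def in_imat_def in_ivec_def row_in_imat_def entry_in_ivec_def
        lp_feasible_def by simp
  qed (simp_all add: s_def)
  then show ?thesis by blast
qed

lemma weakly_optimal_imp_testing_system:
  assumes "weakly_optimal k l m n P xf xn"
  shows "\<exists>\<sigma>. sign_vector k \<sigma> \<and>
           (\<exists>Af' An' a' Bf' Bn' b' yf yn. testing_system k l m n P xf xn \<sigma> Af' An' a' Bf' Bn' b' yf yn)"
proof -
  obtain s where s: "in_Dp k l m n P s" "lp_optimal k l m n s xf xn"
    using assms unfolding weakly_optimal_def by blast
  then obtain yf yn where feas: "lp_feasible k l m n s xf xn"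
    and cert: "dual_certificate k l m n s xf xn yf yn"
    unfolding lp_optimal_iff_dual_certificate by blast
  have "sign_vector k (\<lambda>i. if 0 \<le> yf i then 1 else -1)"
    unfolding sign_vector_def by simp
  with testing_system_if_dual_certificate[OF s(1) feas cert] show ?thesis by blast
qed

lemma weakly_optimal_if_testing_system:
  assumes wf: "ilp_wf k l m n P" and wfeas: "weakly_feasible k l m n P xf xn"
    and ts: "testing_system k l m n P xf xn \<sigma> Af' An' a' Bf' Bn' b' yf yn"
  shows "weakly_optimal k l m n P xf xn"
proof -
  obtain s where "constructed_scenario k l m n P xf xn Af' An' a' Bf' Bn' b' yf yn s"
    using constructed_scenario_exists[OF wfeas] by blast
  with constructed_scenario_optimal[OF wf wfeas ts] show ?thesis
    unfolding weakly_optimal_def by blast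
qed

theorem mainTheorem4:
  fixes k l m n :: nat and P :: ilp and xf xn :: rvec
  assumes "ilp_wf k l m n P"
  shows "(weakly_optimal k l m n P xf xn \<longleftrightarrow>
            weakly_feasible k l m n P xf xn \<and>
            (\<exists>\<sigma>. sign_vector k \<sigma> \<and>
               (\<exists>Af' An' a' Bf' Bn' b' yf yn.
                  testing_system k l m n P xf xn \<sigma> Af' An' a' Bf' Bn' b' yf yn))) \<and>
         (\<forall>\<sigma> Af' An' a' Bf' Bn' b' yf yn s.
            weakly_feasible k l m n P xf xn \<and> sign_vector k \<sigma> \<and>
            testing_system k l m n P xf xn \<sigma> Af' An' a' Bf' Bn' b' yf yn \<and>
            constructed_scenario k l m n P xf xn Af' An' a' Bf' Bn' b' yf yn s \<longrightarrow>
            in_Dp k l m n P s \<and> lp_optimal k l m n s xf xn)"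
proof -
  have "weakly_optimal k l m n P xf xn \<Longrightarrow> weakly_feasible k l m n P xf xn"
    unfolding weakly_optimal_def weakly_feasible_def lp_optimal_def by blast
  then show ?thesis
    by (intro conjI[OF iffI] allI impI)
      (use weakly_optimal_imp_testing_system in blast,
       use weakly_optimal_if_testing_system[OF assms] in blast,
       use constructed_scenario_optimal[OF assms] in blast)
qed

end
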